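(* Let $Q$ be a generalized seed of length $s(Q)\le m$ and let $k\le m$. If $Q$ solves the cyclic $(m,k)$-problem, then for every integer $i\ge 0$ the generalized seed $Q_i=[Q,-^{m-s(Q)}]^i$ solves the (linear) $(m(i+1)+s(Q)-1,\,k)$-problem. Conversely, if $i\ge 1$ and $Q_i$ solves the $(m(i+1)+s(Q)-1,\,k)$-problem, then $Q$ solves the cyclic $(m,k)$-problem.
   Context: A generalized seed is a finite word over $\{\#,-\}$ (it may begin or end with the joker $-$); its length is called its span $s(Q)$. A binary word is an $(m,k)$-similarity if it has length $m$ and exactly $k$ zeros. $Q$ matches a binary word $w$ at position $j$ ($1\le j\le |w|-s(Q)+1$) if $w[j+t-1]=1$ for every $t$ with $Q[t]=\#$; $Q$ detects $w$ if it matches at some position. $Q$ solves the (linear) $(m,k)$-problem if it detects every $(m,k)$-similarity; $Q$ solves the cyclic $(m,k)$-problem if for every $(m,k)$-similarity $w$ it detects at least one cyclic rotation of $w$. For words $Q_1,Q_2$ over $\{\#,-\}$ and $i\ge0$, $[Q_1,Q_2]^i$ denotes the word $(Q_1Q_2)^iQ_1$; $-^{n}$ denotes $n$ jokers. *)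

theory Defs
  imports Main
begin

(* Seeds: lists over bool, True = '#', False = '-' (joker).
   Binary words: lists over bool, True = 1, False = 0.
   Positions are 0-based here (paper: 1-based). *)

type_synonym seed = "bool list"
type_synonym bword = "bool list"

definition span :: "seed \<Rightarrow> nat" where
  "span Q = length Q"

definition matches_at :: "seed \<Rightarrow> bword \<Rightarrow> nat \<Rightarrow> bool" where
  "matches_at Q w j \<longleftrightarrow> j + span Q \<le> length w \<and>
     (\<forall>t < span Q. Q ! t \<longrightarrow> w ! (j + t))"

definition detects :: "seed \<Rightarrow> bword \<Rightarrow> bool" where
  "detects Q w \<longleftrightarrow> (\<exists>j. matches_at Q w j)"

definition similarity :: "nat \<Rightarrow> nat \<Rightarrow> bword \<Rightarrow> bool" where
  "similarity m k w \<longleftrightarrow> length w = m \<and> length (filter Not w) = k"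

definition solves :: "seed \<Rightarrow> nat \<Rightarrow> nat \<Rightarrow> bool" where
  "solves Q m k \<longleftrightarrow> (\<forall>w. similarity m k w \<longrightarrow> detects Q w)"

definition solves_cyclic :: "seed \<Rightarrow> nat \<Rightarrow> nat \<Rightarrow> bool" where
  "solves_cyclic Q m k \<longleftrightarrow> (\<forall>w. similarity m k w \<longrightarrow> (\<exists>r. detects Q (rotate r w)))"

definition jokers :: "nat \<Rightarrow> seed" where
  "jokers n = replicate n False"

definition bracket :: "seed \<Rightarrow> seed \<Rightarrow> nat \<Rightarrow> seed" where
  "bracket Q1 Q2 i = concat (replicate i (Q1 @ Q2)) @ Q1"

end

theory Submission
  imports Defs
begin

(* Write Q_i for the seed bracket Q (jokers (m - |Q|)) i = (Q -^(m-|Q|))^i Q, of length m*i + |Q|.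
   Its letters are m-periodic: Q_i ! n = '#' iff n mod m < |Q| and Q ! (n mod m) = '#'.

   Cyclic => linear.  Given w with k zeros and length m(i+1)+|Q|-1, fold it modulo m into the
   word fold_word m w of length m whose c-th letter is 1 iff all letters of w at positions
   congruent to c are 1.  The folded word has at most k zeros, so it lies (pointwise) above a
   word with exactly k zeros; a cyclic hit of Q in that word is, by monotonicity of detection,
   a hit of Q in a rotation of the folded word, and such a hit unfolds to a hit of Q_i in w.

   Linear => cyclic (i >= 1).  Embed v of length m with k zeros as 1^(m-1) v 1^... into a word of
   the linear length.  Any hit of Q_i at position j < m reads every '#' of Q inside the copy of v,
   which is a hit of Q at position 0 of rotate (j+1) v. *)

lemma bracket_Suc: "bracket Q J (Suc i) = (Q @ J) @ bracket Q J i"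
  by (simp add: bracket_def)

lemma length_bracket:
  assumes "length Q \<le> m"
  shows "length (bracket Q (jokers (m - length Q)) i) = m * i + length Q"
  using assms by (induction i) (simp_all add: bracket_def jokers_def)

lemma nth_bracket:
  assumes "length Q \<le> m" and "n < m * i + length Q"
  shows "bracket Q (jokers (m - length Q)) i ! n = (n mod m < length Q \<and> Q ! (n mod m))"
  using assms(2)
proof (induction i arbitrary: n)
  case 0
  then show ?case using assms(1) by (simp add: bracket_def)
next
  case (Suc i)
  have block: "length (Q @ jokers (m - length Q)) = m"
    using assms(1) by (simp add: jokers_def)
  show ?case
  proof (cases "n < m")
    case True
    then show ?thesis using block by (auto simp: bracket_Suc nth_append jokers_def)
  next
    case False
    then have "n - m < m * i + length Q" and "(n - m) mod m = n mod m"
      using Suc.prems by (simp_all add: le_mod_geq)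
    then show ?thesis using Suc.IH[of "n - m"] False block
      by (simp add: bracket_Suc nth_append del: append_assoc)
  qed
qed

definition below :: "bword \<Rightarrow> bword \<Rightarrow> bool" where
  "below u w \<longleftrightarrow> length u = length w \<and> (\<forall>c < length w. u ! c \<longrightarrow> w ! c)"

lemma detects_mono: "below u w \<Longrightarrow> detects Q u \<Longrightarrow> detects Q w"
proof -
  assume "below u w" and "detects Q u"
  then obtain j where "matches_at Q u j" by (auto simp: detects_def)
  with \<open>below u w\<close> have "matches_at Q w j"
    by (auto simp: below_def matches_at_def)
  then show "detects Q w" by (auto simp: detects_def)
qed

lemma below_rotate: "below u w \<Longrightarrow> below (rotate r u) (rotate r w)"
  unfolding below_def by (auto simp: nth_rotate) (metis less_nat_zero_code mod_less_divisor neq0_conv)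

lemma exists_below_with_zeros:
  assumes "length (filter Not w) \<le> k" and "k \<le> length w"
  shows "\<exists>u. below u w \<and> length (filter Not u) = k"
  using assms
proof (induction "k - length (filter Not w)" arbitrary: w)
  case 0
  then show ?case by (intro exI[of _ w]) (simp add: below_def)
next
  case (Suc d)
  have "filter Not w \<noteq> w" using Suc by auto
  then obtain c where c: "c < length w" "w ! c"
    by (metis filter_True in_set_conv_nth)
  define w' where "w' = w[c := False]"
  have "{p. p < length w' \<and> \<not> w' ! p} = insert c {p. p < length w \<and> \<not> w ! p}"
    using c by (auto simp: w'_def nth_list_update)
  then have "length (filter Not w') = Suc (length (filter Not w))"
    using c by (simp add: length_filter_conv_card)
  then have "d = k - length (filter Not w')" "length (filter Not w') \<le> k" "k \<le> length w'"
    using Suc.hyps(2) Suc.prems(2) by (simp_all add: w'_def)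
  then obtain u where u: "below u w'" "length (filter Not u) = k"
    using Suc.hyps(1) by blast
  have "below w' w" using c by (auto simp: below_def w'_def nth_list_update split: if_splits)
  with u show ?case by (auto simp: below_def)
qed

definition fold_word :: "nat \<Rightarrow> bword \<Rightarrow> bword" where
  "fold_word m w = map (\<lambda>c. \<forall>p < length w. p mod m = c \<longrightarrow> w ! p) [0..<m]"

(* Each zero of the fold is witnessed by a zero of w in its residue class. *)
lemma zeros_fold_word: "length (filter Not (fold_word m w)) \<le> length (filter Not w)"
proof -
  let ?Z = "{p. p < length w \<and> \<not> w ! p}"
  have "{c. c < length (fold_word m w) \<and> \<not> fold_word m w ! c} \<subseteq> (\<lambda>p. p mod m) ` ?Z"
    by (auto simp: fold_word_def)
  then have "card {c. c < length (fold_word m w) \<and> \<not> fold_word m w ! c}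
      \<le> card ((\<lambda>p. p mod m) ` ?Z)"
    by (intro card_mono) auto
  also have "\<dots> \<le> card ?Z" by (rule card_image_le) simp
  finally show ?thesis by (simp add: length_filter_conv_card)
qed

lemma detects_bracket_of_fold:
  assumes "0 < m" and Qm: "length Q \<le> m"
    and lw: "length w = m * (i + 1) + length Q - 1"
    and hit: "detects Q (rotate r (fold_word m w))"
  shows "detects (bracket Q (jokers (m - length Q)) i) w"
proof -
  let ?Qi = "bracket Q (jokers (m - length Q)) i"
  obtain j where j: "j + length Q \<le> m"
    and ones: "\<And>t. t < length Q \<Longrightarrow> Q ! t \<Longrightarrow> rotate r (fold_word m w) ! (j + t)"
    using hit by (auto simp: detects_def matches_at_def span_def fold_word_def)
  define s where "s = (r + j) mod m"
  have "s < m" using \<open>0 < m\<close> by (simp add: s_def)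
  have "w ! (s + n)" if n: "n < m * i + length Q" and "?Qi ! n" for n
  proof -
    have u: "n mod m < length Q" "Q ! (n mod m)"
      using nth_bracket[OF Qm n] \<open>?Qi ! n\<close> by auto
    have "(r + (j + n mod m)) mod m = (r + j + n) mod m"
      by (metis add.assoc mod_add_right_eq)
    then have "rotate r (fold_word m w) ! (j + n mod m) = fold_word m w ! ((r + j + n) mod m)"
      using j u by (simp add: nth_rotate fold_word_def)
    then have "\<forall>p < length w. p mod m = (r + j + n) mod m \<longrightarrow> w ! p"
      using ones[OF u] \<open>0 < m\<close> by (simp add: fold_word_def)
    moreover have "(s + n) mod m = (r + j + n) mod m" by (simp add: s_def mod_add_left_eq)
    moreover have "s + n < length w" using \<open>s < m\<close> n lw by simp
    ultimately show ?thesis by blast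
  qed
  moreover have "s + length ?Qi \<le> length w" using \<open>s < m\<close> lw length_bracket[OF Qm] by simp
  ultimately have "matches_at ?Qi w s"
    by (simp add: matches_at_def span_def length_bracket[OF Qm])
  then show ?thesis by (auto simp: detects_def)
qed

(* First half of the theorem: fold, thin out to exactly k zeros, use the cyclic solution, unfold. *)
lemma solves_bracket_if_cyclic:
  assumes "0 < m" and Qm: "length Q \<le> m" and "k \<le> m" and cyc: "solves_cyclic Q m k"
  shows "solves (bracket Q (jokers (m - length Q)) i) (m * (i + 1) + length Q - 1) k"
  unfolding solves_def similarity_def
proof (intro allI impI, elim conjE)
  fix w assume lw: "length w = m * (i + 1) + length Q - 1" and kw: "length (filter Not w) = k"
  have "length (filter Not (fold_word m w)) \<le> k" using zeros_fold_word kw by metis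
  then obtain u where u: "below u (fold_word m w)" "length (filter Not u) = k"
    using exists_below_with_zeros \<open>k \<le> m\<close> by (fastforce simp: fold_word_def)
  then have "length u = m" by (simp add: below_def fold_word_def)
  then obtain r where "detects Q (rotate r u)"
    using cyc u(2) by (auto simp: solves_cyclic_def similarity_def)
  then have "detects Q (rotate r (fold_word m w))" using detects_mono below_rotate u(1) by blast
  then show "detects (bracket Q (jokers (m - length Q)) i) w"
    using detects_bracket_of_fold[OF \<open>0 < m\<close> Qm lw] by blast
qed

lemma detects_rotation_of_padded:
  assumes "0 < m" and Qm: "length Q \<le> m" and "1 \<le> i" and lv: "length v = m"
    and lw: "length (replicate (m - 1) True @ v @ e) = m * (i + 1) + length Q - 1"
    and hit: "detects (bracket Q (jokers (m - length Q)) i) (replicate (m - 1) True @ v @ e)"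
  shows "\<exists>r. detects Q (rotate r v)"
proof -
  let ?Qi = "bracket Q (jokers (m - length Q)) i" and ?w = "replicate (m - 1) True @ v @ e"
  obtain j where fits: "j + (m * i + length Q) \<le> length ?w"
    and ones: "\<And>n. n < m * i + length Q \<Longrightarrow> ?Qi ! n \<Longrightarrow> ?w ! (j + n)"
    using hit by (auto simp: detects_def matches_at_def span_def length_bracket[OF Qm])
  have "j < m" using fits lw \<open>0 < m\<close> by simp
  have copy: "?w ! ((m - 1) + c) = v ! c" if "c < m" for c
    using nth_append_length_plus[of "replicate (m - 1) True" "v @ e" c] that lv
    by (simp add: nth_append)
  have "rotate (j + 1) v ! u" if u: "u < length Q" "Q ! u" for u
  proof -
    (* read the u-th letter of Q at the copy n of u in Q_i landing inside the copy of v *)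
    define n where "n = (if j + u + 1 < m then m + u else u)"
    have "m \<le> m * i" using \<open>1 \<le> i\<close> by simp
    then have n: "n < m * i + length Q" "n mod m = u"
      using u Qm unfolding n_def by (simp_all, linarith)
    have pos: "j + n = (m - 1) + (j + 1 + u) mod m" and "(j + 1 + u) mod m < m"
      using \<open>j < m\<close> u Qm by (auto simp: n_def le_mod_geq)
    have "?w ! (j + n)" using ones[OF n(1)] nth_bracket[OF Qm n(1)] n(2) u by simp
    then have "v ! ((j + 1 + u) mod m)"
      unfolding pos copy[OF \<open>(j + 1 + u) mod m < m\<close>] .
    moreover have "u < length v" using u Qm lv by simp
    ultimately show ?thesis unfolding nth_rotate[OF \<open>u < length v\<close>] lv
      by (simp add: add.commute add.left_commute)
  qed
  then have "matches_at Q (rotate (j + 1) v) 0"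
    using Qm lv by (simp add: matches_at_def span_def)
  then show ?thesis unfolding detects_def by blast
qed

(* Second half of the theorem: pad each (m,k)-similarity with ones to the linear length. *)
lemma cyclic_if_solves_bracket:
  assumes "0 < m" and Qm: "length Q \<le> m" and "1 \<le> i"
    and sol: "solves (bracket Q (jokers (m - length Q)) i) (m * (i + 1) + length Q - 1) k"
  shows "solves_cyclic Q m k"
  unfolding solves_cyclic_def
proof (intro allI impI)
  fix v assume "similarity m k v"
  then have lv: "length v = m" and kv: "length (filter Not v) = k"
    by (auto simp: similarity_def)
  define e where "e = replicate (m * (i + 1) + length Q - 1 - (2 * m - 1)) True"
  have "m \<le> m * i" using \<open>1 \<le> i\<close> by simp
  moreover have "m * (i + 1) = m * i + m" by simp
  ultimately have "(m - 1) + m + (m * (i + 1) + length Q - 1 - (2 * m - 1)) = m * (i + 1) + length Q - 1"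
    using \<open>0 < m\<close> by linarith
  then have "similarity (m * (i + 1) + length Q - 1) k (replicate (m - 1) True @ v @ e)"
    using lv kv by (simp add: similarity_def e_def)
  then show "\<exists>r. detects Q (rotate r v)"
    using sol detects_rotation_of_padded[OF \<open>0 < m\<close> Qm \<open>1 \<le> i\<close> lv]
    by (auto simp: solves_def similarity_def)
qed

(* For m = 0 the seed is empty and detects every word. *)
lemma detects_Nil: "detects [] w"
  by (auto simp: detects_def matches_at_def span_def)

theorem mainTheorem6:
  fixes Q :: seed and m k :: nat
  assumes "span Q \<le> m" and "k \<le> m"
  shows "(solves_cyclic Q m k \<longrightarrow>
            (\<forall>i. solves (bracket Q (jokers (m - span Q)) i) (m * (i + 1) + span Q - 1) k))
       \<and> (\<forall>i\<ge>1. solves (bracket Q (jokers (m - span Q)) i) (m * (i + 1) + span Q - 1) k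
            \<longrightarrow> solves_cyclic Q m k)"
proof (cases "m = 0")
  case True
  then have "Q = []" using assms(1) by (simp add: span_def)
  then show ?thesis using True
    by (simp add: solves_def solves_cyclic_def bracket_def jokers_def detects_Nil)
next
  case False
  then have "0 < m" by simp
  with assms show ?thesis
    unfolding span_def using solves_bracket_if_cyclic cyclic_if_solves_bracket by blast
qed

end
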